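(* Let $(X,d)$ be a metric space with $|X|\geqslant 3$ and let $T\colon X\to X$ satisfy $$d(Tx,Ty)\leqslant a\,d(x,y)+b\,d(x,Tx)+c\,d(y,Ty)\quad\text{for all } x,y\in X,$$ where $a,b,c\geqslant 0$ and $2a+\frac{3}{2}(b+c)<1$. Then $T$ is a generalized Ćirić–Reich–Rus type mapping on $X$, i.e. there exist $\alpha,\lambda\geqslant 0$ with $2\alpha+\frac{3\lambda}{2}<1$ such that $$d(Tx,Ty)+d(Ty,Tz)+d(Tx,Tz)\leqslant \alpha\big(d(x,y)+d(y,z)+d(z,x)\big)+\lambda\big(d(x,Tx)+d(y,Ty)+d(z,Tz)\big)$$ for all pairwise distinct $x,y,z\in X$.
   Context: A Ćirić–Reich–Rus (ĆRR) type mapping is a self-map $T$ of a metric space satisfying $d(Tx,Ty)\leqslant a\,d(x,y)+b\,d(x,Tx)+c\,d(y,Ty)$ for all $x,y$, with $a,b,c\geqslant0$, $a+b+c<1$ (the hypothesis $2a+\frac32(b+c)<1$ implies $a+b+c<1$). *)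

theory Defs
  imports "HOL-Analysis.Analysis"
begin

definition gen_CRR :: "('a::metric_space \<Rightarrow> 'a) \<Rightarrow> bool" where
  "gen_CRR T \<longleftrightarrow> (\<exists>\<alpha> lam::real. \<alpha> \<ge> 0 \<and> lam \<ge> 0 \<and> 2*\<alpha> + 3*lam/2 < 1 \<and>
     (\<forall>x y z. x \<noteq> y \<and> y \<noteq> z \<and> x \<noteq> z \<longrightarrow>
        dist (T x) (T y) + dist (T y) (T z) + dist (T x) (T z)
        \<le> \<alpha> * (dist x y + dist y z + dist z x) + lam * (dist x (T x) + dist y (T y) + dist z (T z))))"

end

theory Submission
  imports Defs
begin

text \<open>Swapping x and y in the contraction condition and averaging gives
  d(Tx,Ty) \<le> a d(x,y) + (b+c)/2 (d(x,Tx) + d(y,Ty)). Adding this over the three pairs of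
  a triple yields the generalized condition with \<alpha> = a and \<lambda> = b + c, and then
  2\<alpha> + 3\<lambda>/2 < 1 is exactly the hypothesis on a, b, c.\<close>

lemma dist_image_le_symmetrized:
  fixes T :: "'a::metric_space \<Rightarrow> 'a" and a b c :: real
  assumes contr: "\<And>x y. dist (T x) (T y) \<le> a * dist x y + b * dist x (T x) + c * dist y (T y)"
  shows "dist (T x) (T y) \<le> a * dist x y + (b + c) / 2 * (dist x (T x) + dist y (T y))"
proof -
  have "dist (T y) (T x) \<le> a * dist y x + b * dist y (T y) + c * dist x (T x)"
    by (rule contr)
  then have "dist (T x) (T y) \<le> a * dist x y + b * dist y (T y) + c * dist x (T x)"
    by (simp add: dist_commute)
  with contr[of x y] show ?thesis
    by (simp add: field_simps)
qed

lemma dist_image_triangle_sum_le: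
  fixes T :: "'a::metric_space \<Rightarrow> 'a" and a b c :: real
  assumes contr: "\<And>x y. dist (T x) (T y) \<le> a * dist x y + b * dist x (T x) + c * dist y (T y)"
  shows "dist (T x) (T y) + dist (T y) (T z) + dist (T x) (T z)
    \<le> a * (dist x y + dist y z + dist z x) + (b + c) * (dist x (T x) + dist y (T y) + dist z (T z))"
  using dist_image_le_symmetrized[OF contr, of x y] dist_image_le_symmetrized[OF contr, of y z]
    dist_image_le_symmetrized[OF contr, of x z]
  by (simp add: dist_commute field_simps)

theorem proposition2p1:
  fixes T :: "'a::metric_space \<Rightarrow> 'a" and a b c :: real
  assumes card3: "\<exists>x y z::'a. x \<noteq> y \<and> y \<noteq> z \<and> x \<noteq> z"
    and nonneg: "a \<ge> 0" "b \<ge> 0" "c \<ge> 0"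
    and coef: "2*a + 3/2*(b + c) < 1"
    and contr: "\<And>x y. dist (T x) (T y) \<le> a * dist x y + b * dist x (T x) + c * dist y (T y)"
  shows "gen_CRR T"
proof -
  have "b + c \<ge> 0" "2 * a + 3 * (b + c) / 2 < 1"
    using nonneg coef by auto
  then show ?thesis
    unfolding gen_CRR_def using nonneg(1) dist_image_triangle_sum_le[OF contr] by blast
qed

end
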